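(* Assume that the kinetic system $(\Omega, \mathcal R, \mathcal K)$ satisfies the detailed balance property. Let $U \subset \Omega$ and $V := \Omega \setminus U$. Consider the reduced kinetic system $(V, \mathcal R_V, \mathcal K[n_U])$ where $n_U := \{n_s\}_{s \in U}$ with $n_s > 0$ for every $s \in U$. 1. If $U \cap \mathcal D(\mathcal C_V) = \emptyset$, then $(V, \mathcal R_V, \mathcal K[n_U])$ satisfies the detailed balance property. 2. If $U \cap \mathcal D(\mathcal C_V) \neq \emptyset$ and $n_s = e^{-E(s)}$ for all $s \in U \cap \mathcal D(\mathcal C_V)$, for an energy $E \in \mathbb R^N$ of the kinetic system $(\Omega, \mathcal R, \mathcal K)$, then $(V, \mathcal R_V, \mathcal K[n_U])$ satisfies the detailed balance property.
   Context: A chemical network $(\Omega,\mathcal R)$ has substances $\Omega=\{1,\dots,N\}$ and reactions $\mathcal R\subset \mathbb Z^N\setminus\{0\}$; for $R\in\mathcal R$, $I(R)=\{i: R(i)<0\}$, $F(R)=\{i:R(i)>0\}$. It is bidirectional if $R\in\mathcal R$ implies $-R\in\mathcal R$; $\mathcal R_s$ contains one representative of each pair $\{R,-R\}$, and $\textbf{R}\in\mathbb Z^{N\times|\mathcal R_s|}$ is the matrix whose columns are the reactions in $\mathcal R_s$. The space of cycles is $\mathcal C=\ker \textbf{R}$. A kinetic system $(\Omega,\mathcal R,\mathcal K)$ is a bidirectional network with rates $K_R=\mathcal K(R)>0$ (mass action kinetics). It satisfies the detailed balance property if there is $\overline N\in\mathbb R_+^N$ with $K_R\prod_{i\in I(R)}\overline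 N_i^{-R(i)}=K_{-R}\prod_{i\in F(R)}\overline N_i^{R(i)}$ for all $R\in\mathcal R_s$. An energy of $(\Omega,\mathcal R,\mathcal K)$ is any solution $E\in\mathbb R^N$ of $\textbf{R}^T E=w$, where $w(i)=\log(K_{-R_i}/K_{R_i})$ for the columns $R_i$ of $\textbf{R}$. Reduction: for $U\subset\Omega$ nonempty, $V=\Omega\setminus U$, $\pi_V$ denotes projection onto the coordinates in $V$; the reduced reactions are $\mathcal R_V=\{\pi_V \overline R\neq 0:\overline R\in\mathcal R\}$, with reaction matrix $\textbf{R}_V$ and space of cycles $\mathcal C_V=\ker\textbf{R}_V$; the reduced rates are $\mathcal K[n_U](R)=\sum_{\overline R\in\mathcal R:\ \pi_V\overline R=R} K_{\overline R}\prod_{s\in U\cap I(\overline R)} n_s^{-\overline R(s)}$. Finally $\mathcal D(\mathcal C_V):=\{i\in\Omega: \exists R\in\mathcal R \text{ such that } \pi_V R \text{ belongs to a cycle in } \mathcal C_V \text{ and } R(i)\neq 0\}$. *)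

theory Defs
  imports Main "HOL-Analysis.Analysis"
begin

text \<open>Substances form a finite set \<Omega> of an arbitrary type 's. A reaction is a
  vector in \<int>^\<Omega>, represented as a function 's \<Rightarrow> int vanishing outside \<Omega>.\<close>

type_synonym 's reaction = "'s \<Rightarrow> int"

definition rneg :: "'s reaction \<Rightarrow> 's reaction" where
  "rneg R = (\<lambda>i. - R i)"

definition Ireact :: "'s reaction \<Rightarrow> 's set" where
  "Ireact R = {i. R i < 0}"

definition Freact :: "'s reaction \<Rightarrow> 's set" where
  "Freact R = {i. R i > 0}"

definition chemical_network :: "'s set \<Rightarrow> 's reaction set \<Rightarrow> bool" where
  "chemical_network \<Omega> \<R> \<longleftrightarrow> finite \<Omega> \<and> finite \<R> \<and>
     (\<forall>R\<in>\<R>. R \<noteq> (\<lambda>_. 0) \<and> (\<forall>i. i \<notin> \<Omega> \<longrightarrow> R i = 0))"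

definition bidirectional :: "'s reaction set \<Rightarrow> bool" where
  "bidirectional \<R> \<longleftrightarrow> (\<forall>R\<in>\<R>. rneg R \<in> \<R>)"

definition kinetic_system :: "'s set \<Rightarrow> 's reaction set \<Rightarrow> ('s reaction \<Rightarrow> real) \<Rightarrow> bool" where
  "kinetic_system \<Omega> \<R> K \<longleftrightarrow> chemical_network \<Omega> \<R> \<and> bidirectional \<R> \<and> (\<forall>R\<in>\<R>. K R > 0)"

text \<open>The set \<R>_s: one representative of each pair {R, -R} (a fixed choice).\<close>
definition reps :: "'s reaction set \<Rightarrow> 's reaction set" where
  "reps \<R> = (SOME S. S \<subseteq> \<R> \<and> (\<forall>R\<in>\<R>. (R \<in> S) \<noteq> (rneg R \<in> S)))"

definition detailed_balance :: "'s set \<Rightarrow> 's reaction set \<Rightarrow> ('s reaction \<Rightarrow> real) \<Rightarrow> bool" where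
  "detailed_balance \<Omega> \<R> K \<longleftrightarrow>
     (\<exists>Nb :: 's \<Rightarrow> real. (\<forall>i\<in>\<Omega>. Nb i > 0) \<and>
        (\<forall>R\<in>reps \<R>.
           K R * (\<Prod>i\<in>Ireact R. Nb i ^ nat (- R i)) =
           K (rneg R) * (\<Prod>i\<in>Freact R. Nb i ^ nat (R i))))"

text \<open>Space of cycles \<C> = ker \<R> (real coefficients indexed by the columns \<R>_s).\<close>
definition cycles :: "'s reaction set \<Rightarrow> ('s reaction \<Rightarrow> real) set" where
  "cycles \<R> = {c. (\<forall>R. R \<notin> reps \<R> \<longrightarrow> c R = 0) \<and>
                   (\<forall>i. (\<Sum>R\<in>reps \<R>. c R * of_int (R i)) = 0)}"

definition energy :: "'s set \<Rightarrow> 's reaction set \<Rightarrow> ('s reaction \<Rightarrow> real) \<Rightarrow> ('s \<Rightarrow> real) \<Rightarrow> bool" where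
  "energy \<Omega> \<R> K E \<longleftrightarrow>
     (\<forall>R\<in>reps \<R>. (\<Sum>i\<in>\<Omega>. of_int (R i) * E i) = ln (K (rneg R) / K R))"

definition proj :: "'s set \<Rightarrow> 's reaction \<Rightarrow> 's reaction" where
  "proj V R = (\<lambda>i. if i \<in> V then R i else 0)"

definition reduced_reactions :: "'s set \<Rightarrow> 's reaction set \<Rightarrow> 's reaction set" where
  "reduced_reactions V \<R> = {proj V Rb | Rb. Rb \<in> \<R> \<and> proj V Rb \<noteq> (\<lambda>_. 0)}"

definition reduced_rates ::
  "'s set \<Rightarrow> 's set \<Rightarrow> 's reaction set \<Rightarrow> ('s reaction \<Rightarrow> real) \<Rightarrow> ('s \<Rightarrow> real) \<Rightarrow> 's reaction \<Rightarrow> real" where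
  "reduced_rates U V \<R> K n R =
     (\<Sum>Rb\<in>{Rb\<in>\<R>. proj V Rb = R}. K Rb * (\<Prod>s\<in>U \<inter> Ireact Rb. n s ^ nat (- Rb s)))"

text \<open>\<D>(\<C>_V): substances taking part in a reaction whose projection belongs to a cycle
  of the reduced network (i.e. has nonzero coefficient in some cycle).\<close>
definition Dcyc :: "'s set \<Rightarrow> 's set \<Rightarrow> 's reaction set \<Rightarrow> 's set" where
  "Dcyc \<Omega> V \<R> = {i\<in>\<Omega>. \<exists>R\<in>\<R>. \<exists>c\<in>cycles (reduced_reactions V \<R>).
        (c (proj V R) \<noteq> 0 \<or> c (rneg (proj V R)) \<noteq> 0) \<and> R i \<noteq> 0}"

end

theory Submission
  imports Defs "HOL-Library.Function_Algebras"
begin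

text \<open>
  Detailed balance is equivalent to the existence of an energy E, i.e. of a vector with
  K(-R) = K(R) exp(R.E) for every reaction R, and by the Fredholm alternative an energy exists
  as soon as the log-ratios ln (K(-R) / K(R)) are orthogonal to all cycles (Wegscheider's
  condition). The reduced rate of \<pi>_V R is a sum over the lifts of \<pi>_V R to the full network.
  If n_s = exp(-E s) for the frozen substances s occurring in these lifts, the factors n_s absorb
  the U-part of R.E, so each summand for -\<pi>_V R is the matching summand for \<pi>_V R times
  exp(\<pi>_V R . E). This holds for every reduced reaction carrying a cycle, hence the reduced
  log-ratios are orthogonal to the reduced cycles. When no substance of U takes part in a
  reaction carrying a cycle, the condition on n is vacuous and any energy of the full system works.
\<close>

lemma (in vector_space) exists_linear_functional_interpolating:
  fixes v :: "'i \<Rightarrow> 'b" and t :: "'i \<Rightarrow> 'a"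
  assumes S: "finite S"
    and relations: "\<And>c. (\<Sum>r\<in>S. scale (c r) (v r)) = 0 \<Longrightarrow> (\<Sum>r\<in>S. c r * t r) = 0"
  shows "\<exists>g. Vector_Spaces.linear scale (*) g \<and> (\<forall>r\<in>S. g (v r) = t r)"
proof -
  interpret vector_space_pair scale "(*) :: 'a \<Rightarrow> 'a \<Rightarrow> 'a"
    by unfold_locales (simp_all add: algebra_simps)
  obtain B where B: "B \<subseteq> v ` S" "independent B" "v ` S \<subseteq> span B"
    using maximal_independent_subset by blast
  have fB: "finite B" using B(1) S finite_surj by blast
  define pre where "pre = inv_into S v"
  have pre: "pre b \<in> S" "v (pre b) = b" if "b \<in> B" for b
    using B(1) that by (auto simp: pre_def inv_into_into f_inv_into_f)
  obtain g where g: "Vector_Spaces.linear scale (*) g" "\<forall>b\<in>B. g b = t (pre b)"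
    using linear_independent_extend[OF B(2), of "\<lambda>b. t (pre b)"] by blast
  interpret g: Vector_Spaces.linear scale "(*)" g by (fact g(1))
  have "g (v r) = t r" if r: "r \<in> S" for r
  proof -
    obtain u where u: "v r = (\<Sum>b\<in>B. scale (u b) b)"
      using span_finite[OF fB] B(3) r by blast
    define c where "c r' = (\<Sum>b\<in>B. if pre b = r' then u b else 0) - (if r' = r then 1 else 0)" for r'
    have "(\<Sum>r'\<in>S. scale (c r') (v r')) = (\<Sum>b\<in>B. scale (u b) (v (pre b))) - v r"
      using S r
      by (simp add: c_def scale_left_diff_distrib scale_sum_left sum_subtractf
          if_distrib[of "\<lambda>a. scale a _"] cong: if_cong)
        (subst sum.swap, simp add: pre(1))
    also have "\<dots> = 0" using u pre(2) by simp
    finally have "(\<Sum>r'\<in>S. c r' * t r') = 0" by (rule relations)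
    moreover have "(\<Sum>r'\<in>S. c r' * t r') = (\<Sum>b\<in>B. u b * t (pre b)) - t r"
      using S r
      by (simp add: c_def left_diff_distrib sum_distrib_right sum_subtractf
          if_distrib[of "\<lambda>a. a * _"] cong: if_cong)
        (subst sum.swap, simp add: pre(1))
    moreover have "g (v r) = (\<Sum>b\<in>B. u b * t (pre b))"
      using g(2) by (simp add: u g.sum g.scale)
    ultimately show ?thesis by simp
  qed
  with g(1) show ?thesis by blast
qed

lemma sum_apply: "(\<Sum>x\<in>A. f x) i = (\<Sum>x\<in>A. f x i)"
  by (induct A rule: infinite_finite_induct) auto

lemma linear_system_solvable_if_orthogonal_to_relations:
  fixes S :: "('s \<Rightarrow> int) set" and t :: "('s \<Rightarrow> int) \<Rightarrow> real"
  assumes S: "finite S" and A: "finite A"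
    and supp: "\<forall>R\<in>S. \<forall>i. i \<notin> A \<longrightarrow> R i = 0"
    and relations: "\<And>c. \<forall>i. (\<Sum>R\<in>S. c R * of_int (R i)) = 0 \<Longrightarrow> (\<Sum>R\<in>S. c R * t R) = 0"
  shows "\<exists>x. \<forall>R\<in>S. (\<Sum>i\<in>A. of_int (R i) * x i) = t R"
proof -
  define scale :: "real \<Rightarrow> ('s \<Rightarrow> real) \<Rightarrow> 's \<Rightarrow> real" where "scale a f i = a * f i" for a f i
  interpret fun_space: vector_space scale
    by unfold_locales (auto simp: scale_def fun_eq_iff algebra_simps)
  define vec :: "('s \<Rightarrow> int) \<Rightarrow> 's \<Rightarrow> real" where "vec R i = of_int (R i)" for R i
  have "\<exists>g. Vector_Spaces.linear scale (*) g \<and> (\<forall>R\<in>S. g (vec R) = t R)"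
  proof (rule fun_space.exists_linear_functional_interpolating[OF S])
    fix c assume combination: "(\<Sum>R\<in>S. scale (c R) (vec R)) = 0"
    show "(\<Sum>R\<in>S. c R * t R) = 0"
    proof (rule relations, rule allI)
      fix i
      have "(\<Sum>R\<in>S. scale (c R) (vec R)) i = 0"
        unfolding combination by simp
      then show "(\<Sum>R\<in>S. c R * of_int (R i)) = 0"
        by (simp only: sum_apply scale_def vec_def)
    qed
  qed
  then obtain g where g: "Vector_Spaces.linear scale (*) g" "\<forall>R\<in>S. g (vec R) = t R"
    by blast
  interpret g: Vector_Spaces.linear scale "(*)" g by (fact g(1))
  define unit :: "'s \<Rightarrow> 's \<Rightarrow> real" where "unit i j = (if j = i then 1 else 0)" for i j
  have "(\<Sum>i\<in>A. of_int (R i) * g (unit i)) = t R" if R: "R \<in> S" for R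
  proof -
    have "vec R = (\<Sum>i\<in>A. scale (of_int (R i)) (unit i))"
    proof
      fix j
      have "(\<Sum>i\<in>A. scale (of_int (R i)) (unit i)) j = (\<Sum>i\<in>A. if i = j then of_int (R i) else 0)"
        unfolding sum_apply scale_def unit_def by (intro sum.cong) auto
      also have "\<dots> = vec R j"
        using supp R A by (simp add: vec_def)
      finally show "vec R j = (\<Sum>i\<in>A. scale (of_int (R i)) (unit i)) j" ..
    qed
    then have "g (vec R) = (\<Sum>i\<in>A. of_int (R i) * g (unit i))"
      by (simp only: g.sum g.scale)
    with g(2) R show ?thesis by simp
  qed
  then show ?thesis
    by (intro exI[of _ "\<lambda>i. g (unit i)"]) blast
qed

lemma rneg_apply [simp]: "rneg R i = - R i"
  by (simp add: rneg_def)

lemma rneg_rneg [simp]: "rneg (rneg R) = R"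
  by (simp add: rneg_def)

lemma Ireact_rneg [simp]: "Ireact (rneg R) = Freact R"
  by (auto simp: Ireact_def Freact_def)

lemma rneg_eq_0_iff [simp]: "rneg R = (\<lambda>_. 0) \<longleftrightarrow> R = (\<lambda>_. 0)"
  by (auto simp: fun_eq_iff)

lemma rneg_proj: "rneg (proj V R) = proj V (rneg R)"
  by (auto simp: proj_def fun_eq_iff)

lemma kinetic_systemD:
  assumes "kinetic_system \<Omega> \<R> K"
  shows "finite \<Omega>" and "finite \<R>" and "bidirectional \<R>" and "chemical_network \<Omega> \<R>"
    and "\<And>R. R \<in> \<R> \<Longrightarrow> rneg R \<in> \<R>" and "\<And>R. R \<in> \<R> \<Longrightarrow> K R > 0"
    and "\<And>R i. R \<in> \<R> \<Longrightarrow> i \<notin> \<Omega> \<Longrightarrow> R i = 0"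
  using assms unfolding kinetic_system_def chemical_network_def bidirectional_def by blast+

lemma rneg_neq_self:
  assumes "chemical_network \<Omega> \<R>" and "R \<in> \<R>"
  shows "rneg R \<noteq> R"
proof
  assume "rneg R = R"
  then have "- R i = R i" for i
    by (metis rneg_apply)
  then have "R = (\<lambda>_. 0)"
    by fastforce
  with assms show False
    unfolding chemical_network_def by blast
qed

lemma reps_spec:
  assumes "chemical_network \<Omega> \<R>" and "bidirectional \<R>"
  shows "reps \<R> \<subseteq> \<R> \<and> (\<forall>R\<in>\<R>. (R \<in> reps \<R>) \<noteq> (rneg R \<in> reps \<R>))"
  unfolding reps_def
proof (rule someI_ex)
  define pick where "pick R = (SOME R'. R' \<in> {R, rneg R})" for R :: "'a reaction"
  have pick: "pick R = R \<or> pick R = rneg R" for R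
    using someI[of "\<lambda>R'. R' \<in> {R, rneg R}" R] unfolding pick_def by blast
  have pick_rneg: "pick (rneg R) = pick R" for R
    unfolding pick_def by (metis insert_commute rneg_rneg)
  have "(pick R = R) \<longleftrightarrow> (pick (rneg R) \<noteq> rneg R)" if "R \<in> \<R>" for R
    using pick[of R] rneg_neq_self[OF assms(1) that] unfolding pick_rneg by argo
  moreover have "rneg R \<in> \<R>" if "R \<in> \<R>" for R
    using assms(2) that unfolding bidirectional_def by blast
  ultimately show "\<exists>S. S \<subseteq> \<R> \<and> (\<forall>R\<in>\<R>. (R \<in> S) \<noteq> (rneg R \<in> S))"
    by (intro exI[of _ "{R\<in>\<R>. pick R = R}"]) blast
qed

lemma pow_nat_exp:
  fixes y :: real
  assumes "0 \<le> k"
  shows "exp y ^ nat k = exp (of_int k * y)"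
proof -
  have "exp y ^ nat k = exp (of_nat (nat k) * y)"
    by (rule exp_of_nat_mult[symmetric])
  with assms show ?thesis by simp
qed

lemma prod_Ireact_pow_eq_exp:
  fixes N E :: "'s \<Rightarrow> real"
  assumes "finite A" and "\<forall>i\<in>A \<inter> Ireact R. N i = exp (- E i)"
  shows "(\<Prod>i\<in>A \<inter> Ireact R. N i ^ nat (- R i)) = exp (\<Sum>i\<in>A \<inter> Ireact R. of_int (R i) * E i)"
proof -
  have "(\<Prod>i\<in>A \<inter> Ireact R. N i ^ nat (- R i)) = (\<Prod>i\<in>A \<inter> Ireact R. exp (of_int (R i) * E i))"
  proof (rule prod.cong[OF refl])
    fix i assume "i \<in> A \<inter> Ireact R"
    with assms(2) have "N i = exp (- E i)" and "0 \<le> - R i" by (auto simp: Ireact_def)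
    then show "N i ^ nat (- R i) = exp (of_int (R i) * E i)"
      using pow_nat_exp[of "- R i" "- E i"] by simp
  qed
  with assms(1) show ?thesis by (simp add: exp_sum)
qed

lemma prod_Freact_pow_eq_exp:
  fixes N E :: "'s \<Rightarrow> real"
  assumes "finite A" and "\<forall>i\<in>A \<inter> Freact R. N i = exp (- E i)"
  shows "(\<Prod>i\<in>A \<inter> Freact R. N i ^ nat (R i)) = exp (- (\<Sum>i\<in>A \<inter> Freact R. of_int (R i) * E i))"
proof -
  have "(\<Prod>i\<in>A \<inter> Freact R. N i ^ nat (R i)) = (\<Prod>i\<in>A \<inter> Freact R. exp (- (of_int (R i) * E i)))"
  proof (rule prod.cong[OF refl])
    fix i assume "i \<in> A \<inter> Freact R"
    with assms(2) have "N i = exp (- E i)" and "0 \<le> R i" by (auto simp: Freact_def)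
    then show "N i ^ nat (R i) = exp (- (of_int (R i) * E i))"
      using pow_nat_exp[of "R i" "- E i"] by simp
  qed
  with assms(1) show ?thesis by (simp add: exp_sum sum_negf[symmetric])
qed

lemma sum_Ireact_Freact:
  assumes "finite A"
  shows "(\<Sum>i\<in>A \<inter> Ireact R. of_int (R i) * y i) + (\<Sum>i\<in>A \<inter> Freact R. of_int (R i) * y i)
       = (\<Sum>i\<in>A. of_int (R i) * (y i :: real))"
proof -
  have split: "A \<inter> Ireact R = {i\<in>A. R i < 0}" "A \<inter> Freact R = {i\<in>A. R i > 0}"
    by (auto simp: Ireact_def Freact_def)
  show ?thesis
    unfolding split sum.inter_filter[OF assms] sum.distrib[symmetric] by (intro sum.cong) auto
qed

lemma balance_equation_iff_exp:
  fixes k k' :: real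
  assumes "finite \<Omega>" and "\<forall>i. i \<notin> \<Omega> \<longrightarrow> R i = 0" and "\<forall>i\<in>\<Omega>. N i = exp (- E i)"
  shows "k * (\<Prod>i\<in>Ireact R. N i ^ nat (- R i)) = k' * (\<Prod>i\<in>Freact R. N i ^ nat (R i))
     \<longleftrightarrow> k' = k * exp (\<Sum>i\<in>\<Omega>. of_int (R i) * E i)"
proof -
  define a where "a = (\<Sum>i\<in>\<Omega> \<inter> Ireact R. of_int (R i) * E i)"
  define b where "b = (\<Sum>i\<in>\<Omega> \<inter> Freact R. of_int (R i) * E i)"
  have I: "\<Omega> \<inter> Ireact R = Ireact R" and F: "\<Omega> \<inter> Freact R = Freact R"
    using assms(2) by (auto simp: Ireact_def Freact_def)
  have "(\<Prod>i\<in>\<Omega> \<inter> Ireact R. N i ^ nat (- R i)) = exp a"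
    unfolding a_def using assms(1,3) by (intro prod_Ireact_pow_eq_exp) auto
  then have "(\<Prod>i\<in>Ireact R. N i ^ nat (- R i)) = exp a"
    unfolding I .
  moreover have "(\<Prod>i\<in>\<Omega> \<inter> Freact R. N i ^ nat (R i)) = exp (- b)"
    unfolding b_def using assms(1,3) by (intro prod_Freact_pow_eq_exp) auto
  then have "(\<Prod>i\<in>Freact R. N i ^ nat (R i)) = exp (- b)"
    unfolding F .
  moreover have "(\<Sum>i\<in>\<Omega>. of_int (R i) * E i) = a + b"
    unfolding a_def b_def by (rule sum_Ireact_Freact[OF assms(1), symmetric])
  moreover have "k * exp a = k' * exp (- b) \<longleftrightarrow> k' = k * exp (a + b)"
    by (auto simp: exp_add exp_minus field_simps)
  ultimately show ?thesis by simp
qed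

lemma ln_ratio_eq_iff:
  fixes x y s :: real
  assumes "0 < x" and "0 < y"
  shows "s = ln (y / x) \<longleftrightarrow> y = x * exp s"
proof -
  have "s = ln (y / x) \<longleftrightarrow> y / x = exp s"
    using assms by (metis divide_pos_pos exp_ln ln_exp)
  with assms(1) show ?thesis by (auto simp: field_simps)
qed

lemma reps_rates_pos:
  assumes "kinetic_system \<Omega> \<R> K" and "R \<in> reps \<R>"
  shows "K R > 0" and "K (rneg R) > 0"
  using assms(2) reps_spec[OF kinetic_systemD(4,3)[OF assms(1)]] kinetic_systemD(5,6)[OF assms(1)]
  by auto

lemma energy_iff_rate_ratio:
  assumes "kinetic_system \<Omega> \<R> K"
  shows "energy \<Omega> \<R> K E \<longleftrightarrow> (\<forall>R\<in>reps \<R>. K (rneg R) = K R * exp (\<Sum>i\<in>\<Omega>. of_int (R i) * E i))"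
  using reps_rates_pos[OF assms] by (simp add: energy_def ln_ratio_eq_iff)

lemma detailed_balance_iff_energy:
  assumes ks: "kinetic_system \<Omega> \<R> K"
  shows "detailed_balance \<Omega> \<R> K \<longleftrightarrow> (\<exists>E. energy \<Omega> \<R> K E)"
proof -
  have balance: "K R * (\<Prod>i\<in>Ireact R. N i ^ nat (- R i)) = K (rneg R) * (\<Prod>i\<in>Freact R. N i ^ nat (R i))
      \<longleftrightarrow> K (rneg R) = K R * exp (\<Sum>i\<in>\<Omega>. of_int (R i) * E i)"
    if "R \<in> reps \<R>" and "\<forall>i\<in>\<Omega>. N i = exp (- E i)" for R N E
    using that reps_spec[OF kinetic_systemD(4,3)[OF ks]] kinetic_systemD(7)[OF ks]
    by (intro balance_equation_iff_exp[OF kinetic_systemD(1)[OF ks]]) auto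
  show ?thesis
  proof
    assume "detailed_balance \<Omega> \<R> K"
    then obtain N where N: "\<forall>i\<in>\<Omega>. N i > 0" and eq: "\<forall>R\<in>reps \<R>.
        K R * (\<Prod>i\<in>Ireact R. N i ^ nat (- R i)) = K (rneg R) * (\<Prod>i\<in>Freact R. N i ^ nat (R i))"
      by (auto simp: detailed_balance_def)
    have "\<forall>i\<in>\<Omega>. N i = exp (- (- ln (N i)))" using N by simp
    with eq balance have "energy \<Omega> \<R> K (\<lambda>i. - ln (N i))"
      by (simp add: energy_iff_rate_ratio[OF ks])
    then show "\<exists>E. energy \<Omega> \<R> K E" by blast
  next
    assume "\<exists>E. energy \<Omega> \<R> K E"
    then obtain E where "energy \<Omega> \<R> K E" ..
    then have "\<forall>R\<in>reps \<R>. K R * (\<Prod>i\<in>Ireact R. exp (- E i) ^ nat (- R i))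
        = K (rneg R) * (\<Prod>i\<in>Freact R. exp (- E i) ^ nat (R i))"
      using balance[of _ "\<lambda>i. exp (- E i)" E] by (simp add: energy_iff_rate_ratio[OF ks])
    then show "detailed_balance \<Omega> \<R> K"
      unfolding detailed_balance_def by (intro exI[of _ "\<lambda>i. exp (- E i)"]) simp
  qed
qed

lemma energy_rate_ratio:
  assumes ks: "kinetic_system \<Omega> \<R> K" and "energy \<Omega> \<R> K E" and R: "R \<in> \<R>"
  shows "K (rneg R) = K R * exp (\<Sum>i\<in>\<Omega>. of_int (R i) * E i)"
proof (cases "R \<in> reps \<R>")
  case True
  with assms show ?thesis by (simp add: energy_iff_rate_ratio)
next
  case False
  with R reps_spec[OF kinetic_systemD(4,3)[OF ks]] have "rneg R \<in> reps \<R>" by blast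
  with assms(2) have "K (rneg (rneg R)) = K (rneg R) * exp (\<Sum>i\<in>\<Omega>. of_int (rneg R i) * E i)"
    unfolding energy_iff_rate_ratio[OF ks] by blast
  then have "K R = K (rneg R) * exp (- (\<Sum>i\<in>\<Omega>. of_int (R i) * E i))"
    by (simp add: sum_negf)
  then show ?thesis by (simp add: exp_minus field_simps)
qed

lemma cycle_orthogonal_linear_form:
  assumes "c \<in> cycles \<R>"
  shows "(\<Sum>R\<in>reps \<R>. c R * (\<Sum>i\<in>A. of_int (R i) * E i)) = 0"
proof -
  have "(\<Sum>R\<in>reps \<R>. c R * (\<Sum>i\<in>A. of_int (R i) * E i))
      = (\<Sum>i\<in>A. E i * (\<Sum>R\<in>reps \<R>. c R * of_int (R i)))"
    by (simp add: sum_distrib_left sum_distrib_right mult_ac sum.swap[of _ A])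
  also have "\<dots> = 0"
    using assms by (simp add: cycles_def)
  finally show ?thesis .
qed

lemma energy_exists_if_orthogonal_to_cycles:
  assumes ks: "kinetic_system \<Omega> \<R> K"
    and orth: "\<And>c. c \<in> cycles \<R> \<Longrightarrow> (\<Sum>R\<in>reps \<R>. c R * ln (K (rneg R) / K R)) = 0"
  shows "\<exists>E. energy \<Omega> \<R> K E"
proof -
  have reps: "reps \<R> \<subseteq> \<R>"
    using reps_spec[OF kinetic_systemD(4,3)[OF ks]] by blast
  then have "finite (reps \<R>)"
    using kinetic_systemD(2)[OF ks] by (rule finite_subset)
  moreover have "\<forall>R\<in>reps \<R>. \<forall>i. i \<notin> \<Omega> \<longrightarrow> R i = 0"
    using reps kinetic_systemD(7)[OF ks] by blast
  ultimately have "\<exists>E. \<forall>R\<in>reps \<R>. (\<Sum>i\<in>\<Omega>. of_int (R i) * E i) = ln (K (rneg R) / K R)"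
  proof (rule linear_system_solvable_if_orthogonal_to_relations[OF _ kinetic_systemD(1)[OF ks]])
    fix c :: "_ \<Rightarrow> real"
    assume "\<forall>i. (\<Sum>R\<in>reps \<R>. c R * of_int (R i)) = 0"
    then have "(\<lambda>R. if R \<in> reps \<R> then c R else 0) \<in> cycles \<R>"
      by (simp add: cycles_def)
    then have "(\<Sum>R\<in>reps \<R>. (if R \<in> reps \<R> then c R else 0) * ln (K (rneg R) / K R)) = 0"
      by (rule orth)
    then show "(\<Sum>R\<in>reps \<R>. c R * ln (K (rneg R) / K R)) = 0"
      by (simp cong: sum.cong_simp)
  qed
  then show ?thesis
    unfolding energy_def .
qed

lemma kinetic_system_reduced:
  assumes ks: "kinetic_system \<Omega> \<R> K" and "finite V" and npos: "\<forall>s\<in>U. n s > 0"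
  shows "kinetic_system V (reduced_reactions V \<R>) (reduced_rates U V \<R> K n)"
proof -
  have "reduced_reactions V \<R> \<subseteq> proj V ` \<R>"
    by (auto simp: reduced_reactions_def)
  then have "chemical_network V (reduced_reactions V \<R>)"
    using assms(2) kinetic_systemD(2)[OF ks] finite_surj
    by (auto simp: chemical_network_def reduced_reactions_def proj_def)
  moreover have "bidirectional (reduced_reactions V \<R>)"
    unfolding bidirectional_def
  proof
    fix R assume "R \<in> reduced_reactions V \<R>"
    then obtain Rb where "Rb \<in> \<R>" and "R = proj V Rb" and "R \<noteq> (\<lambda>_. 0)"
      by (auto simp: reduced_reactions_def)
    moreover from this have "rneg Rb \<in> \<R>" and "rneg R = proj V (rneg Rb)"
      using kinetic_systemD(5)[OF ks] rneg_proj by auto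
    ultimately show "rneg R \<in> reduced_reactions V \<R>"
      unfolding reduced_reactions_def by force
  qed
  moreover have "reduced_rates U V \<R> K n R > 0" if "R \<in> reduced_reactions V \<R>" for R
    unfolding reduced_rates_def
  proof (rule sum_pos)
    show "finite {Rb \<in> \<R>. proj V Rb = R}"
      using kinetic_systemD(2)[OF ks] by simp
    show "{Rb \<in> \<R>. proj V Rb = R} \<noteq> {}"
      using that by (auto simp: reduced_reactions_def)
    show "K Rb * (\<Prod>s\<in>U \<inter> Ireact Rb. n s ^ nat (- Rb s)) > 0" if "Rb \<in> {Rb \<in> \<R>. proj V Rb = R}" for Rb
    proof (rule mult_pos_pos)
      show "K Rb > 0"
        using that kinetic_systemD(6)[OF ks] by blast
      show "(\<Prod>s\<in>U \<inter> Ireact Rb. n s ^ nat (- Rb s)) > 0"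
        using npos by (intro prod_pos) simp
    qed
  qed
  ultimately show ?thesis
    by (simp add: kinetic_system_def)
qed

lemma reduced_summand_rneg:
  fixes n E :: "'s \<Rightarrow> real"
  assumes "finite \<Omega>" and "U \<subseteq> \<Omega>" and "V = \<Omega> - U"
    and n: "\<forall>s\<in>U. R s \<noteq> 0 \<longrightarrow> n s = exp (- E s)"
    and ratio: "K (rneg R) = K R * exp (\<Sum>i\<in>\<Omega>. of_int (R i) * E i)"
  shows "K (rneg R) * (\<Prod>s\<in>U \<inter> Ireact (rneg R). n s ^ nat (- rneg R s))
       = K R * (\<Prod>s\<in>U \<inter> Ireact R. n s ^ nat (- R s)) * exp (\<Sum>i\<in>V. of_int (R i) * E i)"
proof -
  have fU: "finite U"
    using assms(1,2) by (rule finite_subset[rotated])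
  define a where "a = (\<Sum>s\<in>U \<inter> Ireact R. of_int (R s) * E s)"
  define b where "b = (\<Sum>s\<in>U \<inter> Freact R. of_int (R s) * E s)"
  define v where "v = (\<Sum>i\<in>V. of_int (R i) * E i)"
  have F: "(\<Prod>s\<in>U \<inter> Freact R. n s ^ nat (R s)) = exp (- b)"
    unfolding b_def using fU n by (intro prod_Freact_pow_eq_exp) (auto simp: Freact_def)
  have I: "(\<Prod>s\<in>U \<inter> Ireact R. n s ^ nat (- R s)) = exp a"
    unfolding a_def using fU n by (intro prod_Ireact_pow_eq_exp) (auto simp: Ireact_def)
  have "(\<Sum>i\<in>\<Omega>. of_int (R i) * E i) = (\<Sum>i\<in>U. of_int (R i) * E i) + v"
  proof -
    have "\<Omega> = U \<union> V" and "U \<inter> V = {}"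
      using assms(2,3) by auto
    with assms(1) show ?thesis
      unfolding v_def by (simp add: sum.union_disjoint)
  qed
  with ratio sum_Ireact_Freact[OF fU] have "K (rneg R) = K R * exp ((a + b) + v)"
    unfolding a_def b_def by simp
  then have "K (rneg R) * (\<Prod>s\<in>U \<inter> Ireact (rneg R). n s ^ nat (- rneg R s))
      = K R * exp ((a + b) + v) * exp (- b)"
    using F by simp
  also have "\<dots> = K R * exp (a + v)"
    by (simp add: mult.assoc exp_add[symmetric])
  also have "\<dots> = K R * (\<Prod>s\<in>U \<inter> Ireact R. n s ^ nat (- R s)) * exp v"
    by (simp add: I exp_add)
  finally show ?thesis
    unfolding v_def .
qed

lemma reduced_rates_rneg:
  fixes n E :: "'s \<Rightarrow> real"
  assumes ks: "kinetic_system \<Omega> \<R> K" and "U \<subseteq> \<Omega>" and "V = \<Omega> - U"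
    and en: "energy \<Omega> \<R> K E"
    and n: "\<And>Rb s. Rb \<in> \<R> \<Longrightarrow> proj V Rb = R \<Longrightarrow> s \<in> U \<Longrightarrow> Rb s \<noteq> 0 \<Longrightarrow> n s = exp (- E s)"
  shows "reduced_rates U V \<R> K n (rneg R)
       = reduced_rates U V \<R> K n R * exp (\<Sum>i\<in>V. of_int (R i) * E i)"
proof -
  define A where "A = {Rb \<in> \<R>. proj V Rb = R}"
  have "{Rb \<in> \<R>. proj V Rb = rneg R} = rneg ` A"
  proof (intro equalityI subsetI)
    fix Rb assume "Rb \<in> {Rb \<in> \<R>. proj V Rb = rneg R}"
    then have "rneg Rb \<in> A"
      using kinetic_systemD(5)[OF ks] rneg_proj[of V Rb] by (auto simp: A_def)
    then show "Rb \<in> rneg ` A"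
      by (metis image_eqI rneg_rneg)
  next
    fix Rb assume "Rb \<in> rneg ` A"
    then show "Rb \<in> {Rb \<in> \<R>. proj V Rb = rneg R}"
      using kinetic_systemD(5)[OF ks] by (auto simp: A_def rneg_proj)
  qed
  moreover have "inj_on rneg A"
    by (metis inj_on_inverseI rneg_rneg)
  ultimately have "reduced_rates U V \<R> K n (rneg R)
      = (\<Sum>Rb\<in>A. K (rneg Rb) * (\<Prod>s\<in>U \<inter> Ireact (rneg Rb). n s ^ nat (- rneg Rb s)))"
    by (simp add: reduced_rates_def sum.reindex del: Ireact_rneg rneg_apply)
  also have "\<dots> = (\<Sum>Rb\<in>A. K Rb * (\<Prod>s\<in>U \<inter> Ireact Rb. n s ^ nat (- Rb s))
                       * exp (\<Sum>i\<in>V. of_int (R i) * E i))"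
  proof (rule sum.cong[OF refl])
    fix Rb assume "Rb \<in> A"
    then have Rb: "Rb \<in> \<R>" and proj: "proj V Rb = R"
      by (auto simp: A_def)
    have V_part: "(\<Sum>i\<in>V. of_int (Rb i) * E i) = (\<Sum>i\<in>V. of_int (R i) * E i)"
      using proj by (auto simp: proj_def)
    have "\<forall>s\<in>U. Rb s \<noteq> 0 \<longrightarrow> n s = exp (- E s)"
      using n[OF Rb proj] by blast
    then show "K (rneg Rb) * (\<Prod>s\<in>U \<inter> Ireact (rneg Rb). n s ^ nat (- rneg Rb s))
        = K Rb * (\<Prod>s\<in>U \<inter> Ireact Rb. n s ^ nat (- Rb s)) * exp (\<Sum>i\<in>V. of_int (R i) * E i)"
      using reduced_summand_rneg[OF kinetic_systemD(1)[OF ks] assms(2,3) _ energy_rate_ratio[OF ks en Rb]]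
      unfolding V_part by blast
  qed
  also have "\<dots> = reduced_rates U V \<R> K n R * exp (\<Sum>i\<in>V. of_int (R i) * E i)"
    by (simp add: reduced_rates_def A_def sum_distrib_right)
  finally show ?thesis .
qed

lemma detailed_balance_reduced:
  fixes n E :: "'s \<Rightarrow> real"
  assumes ks: "kinetic_system \<Omega> \<R> K" and U: "U \<subseteq> \<Omega>" and V: "V = \<Omega> - U"
    and npos: "\<forall>s\<in>U. n s > 0" and en: "energy \<Omega> \<R> K E"
    and n: "\<forall>s\<in>U \<inter> Dcyc \<Omega> V \<R>. n s = exp (- E s)"
  shows "detailed_balance V (reduced_reactions V \<R>) (reduced_rates U V \<R> K n)"
proof -
  let ?RV = "reduced_reactions V \<R>" and ?K = "reduced_rates U V \<R> K n"
  have ks_red: "kinetic_system V ?RV ?K"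
    using kinetic_system_reduced[OF ks _ npos] kinetic_systemD(1)[OF ks] V by simp
  have "\<exists>E'. energy V ?RV ?K E'"
  proof (rule energy_exists_if_orthogonal_to_cycles[OF ks_red])
    fix c assume c: "c \<in> cycles ?RV"
    have "c R * ln (?K (rneg R) / ?K R) = c R * (\<Sum>i\<in>V. of_int (R i) * E i)"
      if R: "R \<in> reps ?RV" for R
    proof (cases "c R = 0")
      case False
      have "n s = exp (- E s)"
        if "Rb \<in> \<R>" "proj V Rb = R" "s \<in> U" "Rb s \<noteq> 0" for Rb s
        using that False c U n unfolding Dcyc_def by blast
      then have "?K (rneg R) = ?K R * exp (\<Sum>i\<in>V. of_int (R i) * E i)"
        by (rule reduced_rates_rneg[OF ks U V en])
      moreover have "?K R > 0"
        using reps_rates_pos[OF ks_red R] by blast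
      ultimately show ?thesis
        by simp
    qed simp
    then have "(\<Sum>R\<in>reps ?RV. c R * ln (?K (rneg R) / ?K R))
        = (\<Sum>R\<in>reps ?RV. c R * (\<Sum>i\<in>V. of_int (R i) * E i))"
      by (rule sum.cong[OF refl])
    also have "\<dots> = 0"
      using c by (rule cycle_orthogonal_linear_form)
    finally show "(\<Sum>R\<in>reps ?RV. c R * ln (?K (rneg R) / ?K R)) = 0" .
  qed
  then show ?thesis
    using detailed_balance_iff_energy[OF ks_red] by blast
qed

theorem proposition5p1:
  fixes \<Omega> U V :: "'s set" and \<R> :: "'s reaction set" and K :: "'s reaction \<Rightarrow> real"
    and n :: "'s \<Rightarrow> real"
  assumes ks: "kinetic_system \<Omega> \<R> K"
    and db: "detailed_balance \<Omega> \<R> K"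
    and U: "U \<subseteq> \<Omega>" "U \<noteq> {}"
    and V: "V = \<Omega> - U"
    and npos: "\<forall>s\<in>U. n s > 0"
  shows "(U \<inter> Dcyc \<Omega> V \<R> = {} \<longrightarrow>
            detailed_balance V (reduced_reactions V \<R>) (reduced_rates U V \<R> K n))
       \<and> (\<forall>E. U \<inter> Dcyc \<Omega> V \<R> \<noteq> {} \<and> energy \<Omega> \<R> K E
              \<and> (\<forall>s\<in>U \<inter> Dcyc \<Omega> V \<R>. n s = exp (- E s)) \<longrightarrow>
            detailed_balance V (reduced_reactions V \<R>) (reduced_rates U V \<R> K n))"
proof (intro conjI impI allI)
  assume no_cycles: "U \<inter> Dcyc \<Omega> V \<R> = {}"
  obtain E where "energy \<Omega> \<R> K E"
    using db detailed_balance_iff_energy[OF ks] by blast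
  then show "detailed_balance V (reduced_reactions V \<R>) (reduced_rates U V \<R> K n)"
    using no_cycles by (intro detailed_balance_reduced[OF ks U(1) V npos]) auto
next
  fix E
  assume "U \<inter> Dcyc \<Omega> V \<R> \<noteq> {} \<and> energy \<Omega> \<R> K E
      \<and> (\<forall>s\<in>U \<inter> Dcyc \<Omega> V \<R>. n s = exp (- E s))"
  then show "detailed_balance V (reduced_reactions V \<R>) (reduced_rates U V \<R> K n)"
    by (intro detailed_balance_reduced[OF ks U(1) V npos]) auto
qed

end
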